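(* Let $a,b,d,f\in\mathbb{C}$ with $b\neq0$ and $d\neq 0$. Then the node-wise equi-M sets of the two nodes coincide: $\mathcal{M}(z_1)=\mathcal{M}(z_2)$.
   Context: For $c\in\mathbb{C}$, the 2D coupled quadratic system with connectivity matrix $A=\begin{pmatrix}a&b\\ d&f\end{pmatrix}$ is the iteration $z_1(n+1)=(az_1(n)+bz_2(n))^2+c$, $z_2(n+1)=(dz_1(n)+fz_2(n))^2+c$. The critical orbit is the orbit with $z_1(0)=z_2(0)=0$. The node-wise equi-M set $\mathcal{M}(z_k)$ ($k=1,2$) is the set of $c\in\mathbb{C}$ for which the sequence $(z_k(n))_{n\ge0}$ of the critical orbit is bounded. *)

theory Defs
  imports "HOL-Analysis.Analysis"
begin

fun crit_orbit :: "complex \<Rightarrow> complex \<Rightarrow> complex \<Rightarrow> complex \<Rightarrow> complex \<Rightarrow> nat \<Rightarrow> complex \<times> complex" where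
  "crit_orbit a b d f c 0 = (0, 0)"
| "crit_orbit a b d f c (Suc n) =
     (let z1 = fst (crit_orbit a b d f c n); z2 = snd (crit_orbit a b d f c n)
      in ((a * z1 + b * z2)^2 + c, (d * z1 + f * z2)^2 + c))"

definition equiM1 :: "complex \<Rightarrow> complex \<Rightarrow> complex \<Rightarrow> complex \<Rightarrow> complex set" where
  "equiM1 a b d f = {c. bounded (range (\<lambda>n. fst (crit_orbit a b d f c n)))}"

definition equiM2 :: "complex \<Rightarrow> complex \<Rightarrow> complex \<Rightarrow> complex \<Rightarrow> complex set" where
  "equiM2 a b d f = {c. bounded (range (\<lambda>n. snd (crit_orbit a b d f c n)))}"

end

theory Submission
  imports Defs
begin

text \<open>If x is bounded, then
  so is x(n+1) - c = (a x(n) + b y(n))^2, hence a x(n) + b y(n) is bounded, and for b \<noteq> 0 so is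
  y(n). Applying this once with b and once with d transfers boundedness in both directions.\<close>

lemma bounded_range_coupled_square:
  fixes x y :: "nat \<Rightarrow> 'a::real_normed_field" and a b c :: 'a
  assumes step: "\<And>n. x (Suc n) = (a * x n + b * y n)^2 + c"
    and "b \<noteq> 0" and "bounded (range x)"
  shows "bounded (range y)"
proof -
  obtain M where M: "\<And>n. norm (x n) \<le> M"
    using \<open>bounded (range x)\<close> unfolding bounded_iff by blast
  have "norm (y n) \<le> (sqrt (M + norm c) + norm a * M) / norm b" for n
  proof -
    have "norm (a * x n + b * y n) ^ 2 = norm (x (Suc n) - c)"
      using step[of n] by (simp add: norm_power)
    also have "\<dots> \<le> M + norm c"
      using M[of "Suc n"] norm_triangle_ineq4[of "x (Suc n)" c] by simp
    finally have sq: "norm (a * x n + b * y n) \<le> sqrt (M + norm c)"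
      by (rule real_le_rsqrt)
    have "norm b * norm (y n) = norm ((a * x n + b * y n) - a * x n)"
      by (simp add: norm_mult)
    also have "\<dots> \<le> norm (a * x n + b * y n) + norm a * norm (x n)"
      by (metis norm_mult norm_triangle_ineq4)
    also have "\<dots> \<le> sqrt (M + norm c) + norm a * M"
      using sq M[of n] by (simp add: add_mono mult_left_mono)
    finally show ?thesis
      using \<open>b \<noteq> 0\<close> by (simp add: field_simps)
  qed
  then show ?thesis
    unfolding bounded_iff by blast
qed

lemma crit_orbit_fst_Suc:
  "fst (crit_orbit a b d f c (Suc n)) =
     (a * fst (crit_orbit a b d f c n) + b * snd (crit_orbit a b d f c n))^2 + c"
  by (simp add: Let_def)

lemma crit_orbit_snd_Suc:
  "snd (crit_orbit a b d f c (Suc n)) =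
     (f * snd (crit_orbit a b d f c n) + d * fst (crit_orbit a b d f c n))^2 + c"
  by (simp add: Let_def add.commute)

theorem mainTheorem7:
  fixes a b d f :: complex
  assumes "b \<noteq> 0" and "d \<noteq> 0"
  shows "equiM1 a b d f = equiM2 a b d f"
proof (rule set_eqI)
  fix c
  let ?z1 = "\<lambda>n. fst (crit_orbit a b d f c n)"
  let ?z2 = "\<lambda>n. snd (crit_orbit a b d f c n)"
  have "bounded (range ?z1) \<Longrightarrow> bounded (range ?z2)"
    using bounded_range_coupled_square[where x = ?z1 and y = ?z2, OF crit_orbit_fst_Suc \<open>b \<noteq> 0\<close>] .
  moreover have "bounded (range ?z2) \<Longrightarrow> bounded (range ?z1)"
    using bounded_range_coupled_square[where x = ?z2 and y = ?z1, OF crit_orbit_snd_Suc \<open>d \<noteq> 0\<close>] .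
  ultimately show "c \<in> equiM1 a b d f \<longleftrightarrow> c \<in> equiM2 a b d f"
    unfolding equiM1_def equiM2_def by blast
qed

end
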